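(* Let $c_1,c_2\in\mathbb{R}$ with $|c_1|+|c_2|=1$, $c_1c_2\neq0$ and $|c_1|\neq|c_2|$. Let $c_{2k-1}=c_1$, $c_{2k}=c_2$ for $k\in\mathbb{N}$, and let $J$ be the self-adjoint operator in $l^2(\mathbb{N})$ given by the Jacobi matrix with diagonal entries $q_n=n$ and off-diagonal entries $\lambda_n=c_nn$, i.e. $(Ju)_1=u_1+c_1u_2$, $(Ju)_n=\lambda_{n-1}u_{n-1}+nu_n+\lambda_nu_{n+1}$ for $n\ge2$, on its natural domain $\{u\in l^2(\mathbb{N}):Ju\in l^2(\mathbb{N})\}$. Then $\sigma(J)\cap(-\infty,\frac12)\neq\emptyset$. *)

theory Defs
  imports "HOL-Analysis.Analysis"
begin

text \<open>Sequences in l^2(N). The paper indexes by N = {1,2,...}; we use index k :: nat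
  starting at 0, with k corresponding to the paper's index n = k + 1.\<close>

definition l2 :: "(nat \<Rightarrow> complex) set" where
  "l2 = {u. summable (\<lambda>k. (cmod (u k))\<^sup>2)}"

definition l2_norm :: "(nat \<Rightarrow> complex) \<Rightarrow> real" where
  "l2_norm u = sqrt (\<Sum>k. (cmod (u k))\<^sup>2)"

definition jacobi_apply ::
  "(nat \<Rightarrow> real) \<Rightarrow> (nat \<Rightarrow> real) \<Rightarrow> (nat \<Rightarrow> complex) \<Rightarrow> nat \<Rightarrow> complex" where
  "jacobi_apply q lam u k =
     (if k = 0 then complex_of_real (q 0) * u 0 + complex_of_real (lam 0) * u 1
      else complex_of_real (lam (k - 1)) * u (k - 1) + complex_of_real (q k) * u k
           + complex_of_real (lam k) * u (k + 1))"

definition jacobi_dom :: "(nat \<Rightarrow> real) \<Rightarrow> (nat \<Rightarrow> real) \<Rightarrow> (nat \<Rightarrow> complex) set" where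
  "jacobi_dom q lam = {u \<in> l2. jacobi_apply q lam u \<in> l2}"

definition jacobi_resolvent_set :: "(nat \<Rightarrow> real) \<Rightarrow> (nat \<Rightarrow> real) \<Rightarrow> complex set" where
  "jacobi_resolvent_set q lam =
     {z. (\<forall>f\<in>l2. \<exists>!u. u \<in> jacobi_dom q lam \<and> (\<lambda>k. jacobi_apply q lam u k - z * u k) = f)
       \<and> (\<exists>C. \<forall>u\<in>jacobi_dom q lam.
              l2_norm u \<le> C * l2_norm (\<lambda>k. jacobi_apply q lam u k - z * u k))}"

definition jacobi_spectrum :: "(nat \<Rightarrow> real) \<Rightarrow> (nat \<Rightarrow> real) \<Rightarrow> complex set" where
  "jacobi_spectrum q lam = - jacobi_resolvent_set q lam"

text \<open>Periodic coefficients c_{2k-1} = c1, c_{2k} = c2 (paper indexing from 1);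
  0-based: index k carries c_{k+1}.\<close>
definition per_coeff :: "real \<Rightarrow> real \<Rightarrow> nat \<Rightarrow> real" where
  "per_coeff c1 c2 k = (if even k then c1 else c2)"

end

theory Submission
  imports Defs
begin

text \<open>
  The quadratic form of \<open>J\<close> is nonnegative and \<open>J\<close> is symmetric on its maximal domain.
  For such an operator the supremum \<open>x\<close> of the lower bounds of the form lies in the spectrum:
  were \<open>J - x\<close> boundedly invertible, testing the form on \<open>r - t (J - x)\<^sup>-\<^sup>1 r\<close> would improve
  the lower bound. So it suffices to exhibit a finitely supported \<open>r\<close> whose form is less than
  half its squared norm. A diagonal change of signs makes every off-diagonal entry equal to
  \<open>-|c k| (k + 1)\<close>; grouping the entries \<open>2i, 2i + 1\<close>, the form minus half the squared norm
  becomes a sum of blocks plus a telescoping term. Let \<open>e = (|c2| - |c1|) / 2 \<noteq> 0\<close>, let \<open>p\<close>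
  be a cutoff equal to \<open>1\<close> up to \<open>N\<close> and vanishing from \<open>2N\<close> on, and put \<open>r (2i) = p i\<close>,
  \<open>r (2i + 1) = p i (1 + sgn e |e| / (7 (i + 1)))\<close>. Then block \<open>i\<close> is at most
  \<open>-e\<^sup>2 (p i)\<^sup>2 / (7 (i + 1))\<close> plus a cutoff error, the errors add up to at most \<open>8\<close>, and
  the divergence of the harmonic series makes the total negative for large \<open>N\<close>.
\<close>

section \<open>Real square-summable sequences\<close>

definition l2_real :: "(nat \<Rightarrow> real) set" where
  "l2_real = {r. summable (\<lambda>k. (r k)\<^sup>2)}"

definition l2_inner :: "(nat \<Rightarrow> real) \<Rightarrow> (nat \<Rightarrow> real) \<Rightarrow> real" where
  "l2_inner r s = (\<Sum>k. r k * s k)"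

lemma abs_mult_le_half_sum_squares: "\<bar>x * y\<bar> \<le> (x\<^sup>2 + y\<^sup>2) / (2::real)"
  using sum_squares_bound[of "\<bar>x\<bar>" "\<bar>y\<bar>"] by (simp add: abs_mult)

lemma l2_real_summable_mult:
  assumes "r \<in> l2_real" "s \<in> l2_real"
  shows "summable (\<lambda>k. r k * s k)"
proof (rule summable_comparison_test[of _ "\<lambda>k. ((r k)\<^sup>2 + (s k)\<^sup>2) / 2"])
  show "\<exists>N. \<forall>k\<ge>N. norm (r k * s k) \<le> ((r k)\<^sup>2 + (s k)\<^sup>2) / 2"
    using abs_mult_le_half_sum_squares by auto
  show "summable (\<lambda>k. ((r k)\<^sup>2 + (s k)\<^sup>2) / 2)"
    using assms by (intro summable_divide summable_add) (auto simp: l2_real_def)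
qed

lemma l2_real_lincomb:
  assumes "r \<in> l2_real" "s \<in> l2_real"
  shows "(\<lambda>k. a * r k + b * s k) \<in> l2_real"
proof -
  have "summable (\<lambda>k. a\<^sup>2 * (r k)\<^sup>2 + 2 * a * b * (r k * s k) + b\<^sup>2 * (s k)\<^sup>2)"
    using assms l2_real_summable_mult[OF assms]
    by (intro summable_add summable_mult) (auto simp: l2_real_def)
  then show ?thesis
    unfolding l2_real_def by (simp add: power2_eq_square algebra_simps)
qed

lemma l2_real_Re:
  assumes "u \<in> l2"
  shows "(\<lambda>k. Re (u k)) \<in> l2_real" and "l2_inner (\<lambda>k. Re (u k)) (\<lambda>k. Re (u k)) \<le> (l2_norm u)\<^sup>2"
proof -
  have Re_sq: "(Re z)\<^sup>2 \<le> (cmod z)\<^sup>2" for z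
    using abs_Re_le_cmod[of z] by (metis abs_ge_zero power2_abs power_mono)
  have u: "summable (\<lambda>k. (cmod (u k))\<^sup>2)" using assms by (simp add: l2_def)
  show Re: "(\<lambda>k. Re (u k)) \<in> l2_real"
    unfolding l2_real_def by (auto intro: summable_comparison_test[OF _ u] simp: Re_sq)
  have "l2_inner (\<lambda>k. Re (u k)) (\<lambda>k. Re (u k)) \<le> (\<Sum>k. (cmod (u k))\<^sup>2)"
    unfolding l2_inner_def power2_eq_square[symmetric]
    using Re by (intro suminf_le[OF _ _ u]) (auto simp: l2_real_def Re_sq)
  also have "\<dots> = (l2_norm u)\<^sup>2"
    by (simp add: l2_norm_def u suminf_nonneg)
  finally show "l2_inner (\<lambda>k. Re (u k)) (\<lambda>k. Re (u k)) \<le> (l2_norm u)\<^sup>2" .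
qed

lemma l2_inner_commute: "l2_inner r s = l2_inner s r"
  by (simp add: l2_inner_def mult.commute)

lemma l2_inner_self_nonneg: "r \<in> l2_real \<Longrightarrow> 0 \<le> l2_inner r r"
  unfolding l2_inner_def l2_real_def by (auto simp: power2_eq_square intro: suminf_nonneg)

lemma l2_inner_lincomb_left:
  assumes "r \<in> l2_real" "s \<in> l2_real" "u \<in> l2_real"
  shows "l2_inner (\<lambda>k. a * r k + b * s k) u = a * l2_inner r u + b * l2_inner s u"
proof -
  have "(\<lambda>k. a * (r k * u k) + b * (s k * u k)) sums (a * l2_inner r u + b * l2_inner s u)"
    unfolding l2_inner_def using assms
    by (intro sums_add sums_mult summable_sums l2_real_summable_mult)
  then show ?thesis
    unfolding l2_inner_def by (simp add: sums_iff algebra_simps)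
qed

lemma l2_inner_lincomb_right:
  assumes "r \<in> l2_real" "s \<in> l2_real" "u \<in> l2_real"
  shows "l2_inner u (\<lambda>k. a * r k + b * s k) = a * l2_inner u r + b * l2_inner u s"
  using l2_inner_lincomb_left[OF assms] by (simp add: l2_inner_commute)

lemma l2_inner_le_weighted:
  assumes "r \<in> l2_real" "s \<in> l2_real" "C > 0"
  shows "l2_inner r s \<le> (C * l2_inner r r + l2_inner s s / C) / 2"
proof -
  have "(\<lambda>k. (C * (r k * r k) + s k * s k / C) / 2) sums ((C * l2_inner r r + l2_inner s s / C) / 2)"
    unfolding l2_inner_def using assms
    by (intro sums_divide sums_add sums_mult summable_sums l2_real_summable_mult)
  moreover have "r k * s k \<le> (C * (r k * r k) + s k * s k / C) / 2" for k
  proof -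
    have "0 \<le> (C * r k - s k)\<^sup>2 / C" using assms(3) by simp
    then show ?thesis using assms(3) by (simp add: power2_diff field_simps power2_eq_square)
  qed
  ultimately show ?thesis
    unfolding l2_inner_def
    by (intro sums_le[OF _ summable_sums[OF l2_real_summable_mult[OF assms(1,2)]]]) auto
qed

lemma summable_not_eventually_ge_harmonic:
  assumes "summable h" "eps > 0"
  shows "\<not> eventually (\<lambda>n. eps \<le> real (Suc n) * h n) sequentially"
proof
  assume ev: "eventually (\<lambda>n. eps \<le> real (Suc n) * h n) sequentially"
  have "summable (\<lambda>n. eps / real (Suc n))"
  proof (rule summable_comparison_test_ev[OF _ assms(1)])
    show "\<forall>\<^sub>F n in sequentially. norm (eps / real (Suc n)) \<le> h n"
      using ev by eventually_elim (use assms(2) in \<open>auto simp: field_simps\<close>)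
  qed
  then have "summable (\<lambda>n. (1 / eps) * (eps / real (Suc n)))"
    by (rule summable_mult)
  then have "summable (\<lambda>n. inverse (real (Suc n)))"
    using assms(2) by (simp add: field_simps)
  then show False
    using not_summable_harmonic[where 'a=real] summable_Suc_iff by blast
qed

lemma harm_unbounded: "\<exists>N>0. B < (harm N :: real)"
proof -
  have "eventually (\<lambda>N. B + 1 \<le> harm N \<and> 0 < N) sequentially"
    using harm_at_top eventually_gt_at_top[of 0] unfolding filterlim_at_top
    by (intro eventually_conj) auto
  then obtain N where "\<forall>n\<ge>N. B + 1 \<le> harm n \<and> 0 < n"
    unfolding eventually_sequentially by blast
  then show ?thesis by (intro exI[of _ N]) auto
qed

section \<open>Jacobi operators on real sequences\<close>

definition jacobi_real ::
  "(nat \<Rightarrow> real) \<Rightarrow> (nat \<Rightarrow> real) \<Rightarrow> (nat \<Rightarrow> real) \<Rightarrow> nat \<Rightarrow> real" where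
  "jacobi_real q lam r k =
     (if k = 0 then q 0 * r 0 + lam 0 * r 1
      else lam (k - 1) * r (k - 1) + q k * r k + lam k * r (k + 1))"

definition jacobi_dom_real :: "(nat \<Rightarrow> real) \<Rightarrow> (nat \<Rightarrow> real) \<Rightarrow> (nat \<Rightarrow> real) set" where
  "jacobi_dom_real q lam = {r \<in> l2_real. jacobi_real q lam r \<in> l2_real}"

lemma Re_jacobi_apply: "Re (jacobi_apply q lam u k) = jacobi_real q lam (\<lambda>k. Re (u k)) k"
  by (simp add: jacobi_apply_def jacobi_real_def)

lemma jacobi_real_lincomb:
  "jacobi_real q lam (\<lambda>k. a * r k + b * s k)
     = (\<lambda>k. a * jacobi_real q lam r k + b * jacobi_real q lam s k)"
  by (rule ext) (simp add: jacobi_real_def algebra_simps)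

lemma jacobi_dom_real_lincomb:
  assumes "r \<in> jacobi_dom_real q lam" "s \<in> jacobi_dom_real q lam"
  shows "(\<lambda>k. a * r k + b * s k) \<in> jacobi_dom_real q lam"
  using assms by (simp add: jacobi_dom_real_def jacobi_real_lincomb l2_real_lincomb)

lemma jacobi_real_partial_sum_antisym:
  "(\<Sum>k<Suc N. jacobi_real q lam r k * s k - r k * jacobi_real q lam s k)
     = lam N * (r (Suc N) * s N - s (Suc N) * r N)"
proof (induction N)
  case (Suc N)
  show ?case
    by (subst sum.lessThan_Suc, subst Suc) (simp add: jacobi_real_def algebra_simps)
qed (simp add: jacobi_real_def algebra_simps)

text \<open>The boundary term of the partial sums is at most \<open>O(N)\<close> times a summable sequence,
  so it can only tend to \<open>0\<close>: the harmonic series diverges.\<close>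
lemma jacobi_real_symmetric:
  assumes lam: "\<And>k. \<bar>lam k\<bar> \<le> B * real (Suc k)"
    and r: "r \<in> jacobi_dom_real q lam" and s: "s \<in> jacobi_dom_real q lam"
  shows "l2_inner (jacobi_real q lam r) s = l2_inner r (jacobi_real q lam s)"
proof (rule ccontr)
  define L where "L = l2_inner (jacobi_real q lam r) s - l2_inner r (jacobi_real q lam s)"
  assume "l2_inner (jacobi_real q lam r) s \<noteq> l2_inner r (jacobi_real q lam s)"
  then have L: "L \<noteq> 0" by (simp add: L_def)
  have "(\<lambda>k. jacobi_real q lam r k * s k - r k * jacobi_real q lam s k) sums L"
    using r s unfolding L_def l2_inner_def jacobi_dom_real_def
    by (intro sums_diff summable_sums l2_real_summable_mult) auto
  then have "(\<lambda>n. \<Sum>k<Suc n. jacobi_real q lam r k * s k - r k * jacobi_real q lam s k)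
      \<longlonglongrightarrow> L"
    unfolding sums_def by (rule LIMSEQ_Suc)
  then have boundary: "(\<lambda>n. lam n * (r (Suc n) * s n - s (Suc n) * r n)) \<longlonglongrightarrow> L"
    by (simp only: jacobi_real_partial_sum_antisym)
  define h where "h n = B * (((r (Suc n))\<^sup>2 + (s n)\<^sup>2 + (s (Suc n))\<^sup>2 + (r n)\<^sup>2) / 2)" for n
  have "summable (\<lambda>k. (r k)\<^sup>2)" "summable (\<lambda>k. (s k)\<^sup>2)"
    using r s by (auto simp: jacobi_dom_real_def l2_real_def)
  then have h: "summable h"
    unfolding h_def using summable_Suc_iff[of "\<lambda>k. (r k)\<^sup>2"] summable_Suc_iff[of "\<lambda>k. (s k)\<^sup>2"]
    by (intro summable_mult summable_divide summable_add) auto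
  have "eventually (\<lambda>n. \<bar>L\<bar> / 2 < \<bar>lam n * (r (Suc n) * s n - s (Suc n) * r n)\<bar>)
      sequentially"
    using tendsto_rabs[OF boundary] L by (intro order_tendstoD) auto
  then have "eventually (\<lambda>n. \<bar>L\<bar> / 2 \<le> real (Suc n) * h n) sequentially"
  proof eventually_elim
    case (elim n)
    have "\<bar>r (Suc n) * s n - s (Suc n) * r n\<bar> \<le> \<bar>r (Suc n) * s n\<bar> + \<bar>s (Suc n) * r n\<bar>"
      by simp
    also have "\<dots> \<le> ((r (Suc n))\<^sup>2 + (s n)\<^sup>2 + (s (Suc n))\<^sup>2 + (r n)\<^sup>2) / 2"
      using abs_mult_le_half_sum_squares[of "r (Suc n)" "s n"]
        abs_mult_le_half_sum_squares[of "s (Suc n)" "r n"] by simp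
    finally have "\<bar>lam n\<bar> * \<bar>r (Suc n) * s n - s (Suc n) * r n\<bar>
        \<le> B * real (Suc n) * (((r (Suc n))\<^sup>2 + (s n)\<^sup>2 + (s (Suc n))\<^sup>2 + (r n)\<^sup>2) / 2)"
      using lam[of n] by (intro mult_mono) auto
    then show ?case using elim by (simp add: h_def abs_mult mult_ac)
  qed
  then show False
    using summable_not_eventually_ge_harmonic[OF h, of "\<bar>L\<bar> / 2"] L by simp
qed

definition jacobi_truncated_form ::
  "(nat \<Rightarrow> real) \<Rightarrow> (nat \<Rightarrow> real) \<Rightarrow> (nat \<Rightarrow> real) \<Rightarrow> nat \<Rightarrow> real" where
  "jacobi_truncated_form q lam r N =
     (\<Sum>k\<le>N. q k * (r k)\<^sup>2) + 2 * (\<Sum>k<N. lam k * r k * r (Suc k))"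

lemma jacobi_real_partial_form:
  "(\<Sum>k<Suc N. jacobi_real q lam r k * r k)
     = jacobi_truncated_form q lam r N + lam N * r N * r (Suc N)"
proof (induction N)
  case (Suc N)
  show ?case
    by (subst sum.lessThan_Suc, subst Suc)
      (simp add: jacobi_real_def jacobi_truncated_form_def power2_eq_square algebra_simps)
qed (simp add: jacobi_real_def jacobi_truncated_form_def power2_eq_square algebra_simps)

lemma jacobi_form_finite_support:
  assumes "\<And>k. M \<le> k \<Longrightarrow> r k = 0"
  shows "r \<in> jacobi_dom_real q lam"
    and "l2_inner (jacobi_real q lam r) r = jacobi_truncated_form q lam r M"
    and "l2_inner r r = (\<Sum>k\<le>M. (r k)\<^sup>2)"
proof -
  have J: "jacobi_real q lam r k = 0" if "Suc M \<le> k" for k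
    using that assms[of "k - 1"] assms[of k] assms[of "k + 1"] by (simp add: jacobi_real_def)
  show "r \<in> jacobi_dom_real q lam"
    unfolding jacobi_dom_real_def l2_real_def
    using summable_finite[of "{..<Suc M}" "\<lambda>k. (r k)\<^sup>2"]
      summable_finite[of "{..<Suc M}" "\<lambda>k. (jacobi_real q lam r k)\<^sup>2"]
    by (auto simp: assms J)
  have "l2_inner (jacobi_real q lam r) r = (\<Sum>k<Suc M. jacobi_real q lam r k * r k)"
    unfolding l2_inner_def by (rule suminf_finite) (auto simp: J)
  also have "\<dots> = jacobi_truncated_form q lam r M"
    using jacobi_real_partial_form[of q lam r M] assms[of "Suc M"] by simp
  finally show "l2_inner (jacobi_real q lam r) r = jacobi_truncated_form q lam r M" .
  show "l2_inner r r = (\<Sum>k\<le>M. (r k)\<^sup>2)"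
    unfolding l2_inner_def power2_eq_square lessThan_Suc_atMost[symmetric]
    by (rule suminf_finite) (auto simp: assms)
qed

lemma quadratic_step_lower_bound:
  fixes c c' x y n :: real
  assumes "\<bar>c\<bar> + \<bar>c'\<bar> \<le> 1" "0 \<le> n"
  shows "\<bar>c'\<bar> * (n + 2) * y\<^sup>2 \<le> \<bar>c\<bar> * (n + 1) * x\<^sup>2 + 2 * (c * (n + 1)) * x * y + (n + 2) * y\<^sup>2"
proof -
  have square: "\<bar>c\<bar> * (n + 1) * x\<^sup>2 + 2 * (c * (n + 1)) * x * y + \<bar>c\<bar> * (n + 2) * y\<^sup>2
      = (n + 1) * (\<bar>c\<bar> * (x + sgn c * y)\<^sup>2) + \<bar>c\<bar> * y\<^sup>2"
    by (cases "c > 0"; cases "c = 0") (auto simp: power2_eq_square algebra_simps)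
  have "\<bar>c'\<bar> * (n + 2) * y\<^sup>2 \<le> (1 - \<bar>c\<bar>) * (n + 2) * y\<^sup>2"
    using assms by (intro mult_right_mono) auto
  moreover have "0 \<le> (n + 1) * (\<bar>c\<bar> * (x + sgn c * y)\<^sup>2) + \<bar>c\<bar> * y\<^sup>2"
    using assms(2) by simp
  ultimately show ?thesis
    using square by (simp add: algebra_simps)
qed

lemma jacobi_truncated_form_lower_bound:
  assumes c: "\<And>k. \<bar>c k\<bar> + \<bar>c (Suc k)\<bar> \<le> 1"
  shows "\<bar>c N\<bar> * real (N + 1) * (r N)\<^sup>2
    \<le> jacobi_truncated_form (\<lambda>k. real (k + 1)) (\<lambda>k. c k * real (k + 1)) r N"
proof (induction N)
  case 0
  have "\<bar>c 0\<bar> \<le> 1" using c[of 0] by simp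
  then show ?case
    using mult_right_mono[of "\<bar>c 0\<bar>" 1 "(r 0)\<^sup>2"] by (simp add: jacobi_truncated_form_def)
next
  case (Suc N)
  have "jacobi_truncated_form (\<lambda>k. real (k + 1)) (\<lambda>k. c k * real (k + 1)) r (Suc N)
      = jacobi_truncated_form (\<lambda>k. real (k + 1)) (\<lambda>k. c k * real (k + 1)) r N
        + 2 * (c N * (real N + 1)) * r N * r (Suc N) + (real N + 2) * (r (Suc N))\<^sup>2"
    by (simp add: jacobi_truncated_form_def algebra_simps)
  moreover have "\<bar>c (Suc N)\<bar> * (real N + 2) * (r (Suc N))\<^sup>2
      \<le> \<bar>c N\<bar> * (real N + 1) * (r N)\<^sup>2 + 2 * (c N * (real N + 1)) * r N * r (Suc N)
        + (real N + 2) * (r (Suc N))\<^sup>2"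
    using c by (intro quadratic_step_lower_bound) auto
  ultimately show ?case
    using Suc by (simp add: add.commute)
qed

text \<open>The partial sums of the form are a nonnegative truncated form plus a boundary term
  \<open>O(n)\<close> times a summable sequence, which cannot stay below a negative constant.\<close>
lemma jacobi_form_nonneg:
  assumes c: "\<And>k. \<bar>c k\<bar> + \<bar>c (Suc k)\<bar> \<le> 1"
    and r: "r \<in> jacobi_dom_real (\<lambda>k. real (k + 1)) (\<lambda>k. c k * real (k + 1))"
  shows "0 \<le> l2_inner (jacobi_real (\<lambda>k. real (k + 1)) (\<lambda>k. c k * real (k + 1)) r) r"
    (is "0 \<le> l2_inner (?J r) r")
proof (rule ccontr)
  define L where "L = l2_inner (?J r) r"
  assume "\<not> 0 \<le> l2_inner (?J r) r"
  then have L: "L < 0" by (simp add: L_def)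
  define h where "h n = ((r n)\<^sup>2 + (r (Suc n))\<^sup>2) / 2" for n
  have "(\<lambda>k. ?J r k * r k) sums L"
    using r unfolding L_def l2_inner_def jacobi_dom_real_def
    by (intro summable_sums l2_real_summable_mult) auto
  then have "(\<lambda>n. \<Sum>k<Suc n. ?J r k * r k) \<longlonglongrightarrow> L"
    unfolding sums_def by (rule LIMSEQ_Suc)
  then have "eventually (\<lambda>n. (\<Sum>k<Suc n. ?J r k * r k) < L / 2) sequentially"
    using L by (intro order_tendstoD) auto
  then have "eventually (\<lambda>n. - L / 2 \<le> real (Suc n) * h n) sequentially"
  proof eventually_elim
    case (elim n)
    have "0 \<le> \<bar>c n\<bar> * real (n + 1) * (r n)\<^sup>2" by simp
    also have "\<dots> \<le> jacobi_truncated_form (\<lambda>k. real (k + 1)) (\<lambda>k. c k * real (k + 1)) r n"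
      by (rule jacobi_truncated_form_lower_bound[of c, OF c])
    finally have T: "0 \<le> jacobi_truncated_form (\<lambda>k. real (k + 1)) (\<lambda>k. c k * real (k + 1)) r n" .
    have "\<bar>c n\<bar> \<le> 1" using c[of n] by simp
    then have "\<bar>c n * real (n + 1)\<bar> * \<bar>r n * r (Suc n)\<bar> \<le> real (Suc n) * h n"
      using abs_mult_le_half_sum_squares[of "r n" "r (Suc n)"]
      unfolding h_def abs_mult by (intro mult_mono) auto
    then have "\<bar>c n * real (n + 1) * r n * r (Suc n)\<bar> \<le> real (Suc n) * h n"
      by (simp only: abs_mult mult.assoc)
    then show ?case
      using elim T abs_le_iff jacobi_real_partial_form[of "\<lambda>k. real (k + 1)" "\<lambda>k. c k * real (k + 1)" r n]
      by linarith
  qed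
  moreover have "summable h"
    using r summable_Suc_iff[of "\<lambda>k. (r k)\<^sup>2"] unfolding h_def
    by (intro summable_divide summable_add) (auto simp: jacobi_dom_real_def l2_real_def)
  ultimately show False
    using summable_not_eventually_ge_harmonic[of h "- L / 2"] L by simp
qed

section \<open>The bottom of the form lies in the spectrum\<close>

definition jacobi_lower_bound :: "(nat \<Rightarrow> real) \<Rightarrow> (nat \<Rightarrow> real) \<Rightarrow> real \<Rightarrow> bool" where
  "jacobi_lower_bound q lam x \<longleftrightarrow>
     (\<forall>r\<in>jacobi_dom_real q lam. x * l2_inner r r \<le> l2_inner (jacobi_real q lam r) r)"

lemma jacobi_lower_bound_le_Rayleigh_quotient:
  assumes "jacobi_lower_bound q lam x" "r \<in> jacobi_dom_real q lam" "0 < l2_inner r r"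
  shows "x \<le> l2_inner (jacobi_real q lam r) r / l2_inner r r"
  using assms by (simp add: jacobi_lower_bound_def field_simps)

lemma jacobi_lower_bound_Sup:
  assumes "jacobi_lower_bound q lam m" "bdd_above {x. jacobi_lower_bound q lam x}"
  shows "jacobi_lower_bound q lam (Sup {x. jacobi_lower_bound q lam x})"
proof -
  define S where "S = {x. jacobi_lower_bound q lam x}"
  have "Sup S * l2_inner r r \<le> l2_inner (jacobi_real q lam r) r"
    if r: "r \<in> jacobi_dom_real q lam" for r
  proof -
    have "0 \<le> l2_inner r r"
      using r by (simp add: jacobi_dom_real_def l2_inner_self_nonneg)
    then consider "l2_inner r r = 0" | "0 < l2_inner r r" by linarith
    then show ?thesis
    proof cases
      case 1
      have "m * l2_inner r r \<le> l2_inner (jacobi_real q lam r) r"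
        using assms(1) r by (simp add: jacobi_lower_bound_def)
      then show ?thesis using 1 by simp
    next
      case 2
      have "Sup S \<le> l2_inner (jacobi_real q lam r) r / l2_inner r r"
        unfolding S_def using assms(1) jacobi_lower_bound_le_Rayleigh_quotient[OF _ r 2]
        by (intro cSup_least) auto
      then show ?thesis using 2 by (simp add: field_simps)
    qed
  qed
  then show ?thesis
    unfolding jacobi_lower_bound_def S_def by blast
qed

lemma jacobi_real_part_of_solution:
  assumes u: "u \<in> jacobi_dom q lam"
    and eq: "(\<lambda>k. jacobi_apply q lam u k - complex_of_real x * u k) = (\<lambda>k. complex_of_real (r k))"
  shows "(\<lambda>k. Re (u k)) \<in> jacobi_dom_real q lam"
    and "jacobi_real q lam (\<lambda>k. Re (u k)) = (\<lambda>k. r k + x * Re (u k))"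
    and "l2_inner (\<lambda>k. Re (u k)) (\<lambda>k. Re (u k)) \<le> (l2_norm u)\<^sup>2"
proof -
  show "jacobi_real q lam (\<lambda>k. Re (u k)) = (\<lambda>k. r k + x * Re (u k))"
  proof
    fix k
    have "Re (jacobi_apply q lam u k) - x * Re (u k) = r k"
      using arg_cong[OF fun_cong[OF eq, of k], of Re] by simp
    then show "jacobi_real q lam (\<lambda>k. Re (u k)) k = r k + x * Re (u k)"
      by (simp add: Re_jacobi_apply[symmetric])
  qed
  have "u \<in> l2" "jacobi_apply q lam u \<in> l2" using u by (auto simp: jacobi_dom_def)
  then show "(\<lambda>k. Re (u k)) \<in> jacobi_dom_real q lam"
    and "l2_inner (\<lambda>k. Re (u k)) (\<lambda>k. Re (u k)) \<le> (l2_norm u)\<^sup>2"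
    using l2_real_Re[of u] l2_real_Re[of "jacobi_apply q lam u"]
    by (auto simp: jacobi_dom_real_def Re_jacobi_apply)
qed

lemma jacobi_resolvent_real_preimage:
  assumes "complex_of_real x \<in> jacobi_resolvent_set q lam"
  obtains C where "C > 0"
    and "\<And>r. r \<in> l2_real \<Longrightarrow> \<exists>v\<in>jacobi_dom_real q lam.
           jacobi_real q lam v = (\<lambda>k. r k + x * v k) \<and> l2_inner v v \<le> C\<^sup>2 * l2_inner r r"
proof -
  obtain C0 where C0: "\<And>u. u \<in> jacobi_dom q lam \<Longrightarrow>
      l2_norm u \<le> C0 * l2_norm (\<lambda>k. jacobi_apply q lam u k - complex_of_real x * u k)"
    using assms unfolding jacobi_resolvent_set_def by blast
  have onto: "\<And>f. f \<in> l2 \<Longrightarrow> \<exists>u. u \<in> jacobi_dom q lam \<and>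
      (\<lambda>k. jacobi_apply q lam u k - complex_of_real x * u k) = f"
    using assms unfolding jacobi_resolvent_set_def by blast
  define C where "C = max C0 1"
  have "\<exists>v\<in>jacobi_dom_real q lam.
      jacobi_real q lam v = (\<lambda>k. r k + x * v k) \<and> l2_inner v v \<le> C\<^sup>2 * l2_inner r r"
    if r: "r \<in> l2_real" for r
  proof -
    have "(\<lambda>k. complex_of_real (r k)) \<in> l2" using r by (simp add: l2_def l2_real_def)
    then obtain u where u: "u \<in> jacobi_dom q lam"
      and eq: "(\<lambda>k. jacobi_apply q lam u k - complex_of_real x * u k) = (\<lambda>k. complex_of_real (r k))"
      using onto by blast
    have R: "0 \<le> l2_inner r r" using r by (rule l2_inner_self_nonneg)
    have "l2_norm u \<le> C0 * sqrt (l2_inner r r)"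
      using C0[OF u] by (simp add: eq l2_norm_def l2_inner_def power2_eq_square)
    also have "\<dots> \<le> C * sqrt (l2_inner r r)"
      using R by (intro mult_right_mono) (auto simp: C_def)
    finally have "(l2_norm u)\<^sup>2 \<le> (C * sqrt (l2_inner r r))\<^sup>2"
      using u by (intro power_mono) (auto simp: l2_norm_def jacobi_dom_def l2_def suminf_nonneg)
    then have "l2_inner (\<lambda>k. Re (u k)) (\<lambda>k. Re (u k)) \<le> C\<^sup>2 * l2_inner r r"
      using jacobi_real_part_of_solution(3)[OF u eq] R by (simp add: power_mult_distrib)
    then show ?thesis
      using jacobi_real_part_of_solution(1,2)[OF u eq] by blast
  qed
  moreover have "C > 0" by (simp add: C_def)
  ultimately show thesis using that by blast
qed

lemma jacobi_form_shifted_perturbation: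
  fixes t :: real
  assumes sym: "l2_inner (jacobi_real q lam r) v = l2_inner r (jacobi_real q lam v)"
    and r: "r \<in> jacobi_dom_real q lam" and v: "v \<in> jacobi_dom_real q lam"
    and Jv: "jacobi_real q lam v = (\<lambda>k. r k + x * v k)"
  defines "w \<equiv> \<lambda>k. r k - t * v k"
  shows "l2_inner (jacobi_real q lam w) w - x * l2_inner w w
    = l2_inner (jacobi_real q lam r) r - x * l2_inner r r - 2 * t * l2_inner r r
      + t\<^sup>2 * l2_inner r v"
proof -
  let ?J = "jacobi_real q lam"
  have rl: "r \<in> l2_real" "?J r \<in> l2_real" and vl: "v \<in> l2_real" "?J v \<in> l2_real"
    using r v by (auto simp: jacobi_dom_real_def)
  have w_lincomb: "w = (\<lambda>k. 1 * r k + (- t) * v k)" by (simp add: w_def)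
  have "w \<in> jacobi_dom_real q lam"
    unfolding w_lincomb using r v by (rule jacobi_dom_real_lincomb)
  then have wl: "w \<in> l2_real" by (simp add: jacobi_dom_real_def)
  define R S F where "R = l2_inner r r" and "S = l2_inner r v" and "F = l2_inner (?J r) r"
  have JrV: "l2_inner (?J r) v = R + x * S"
    using sym l2_inner_lincomb_right[OF rl(1) vl(1) rl(1), of 1 x] by (simp add: Jv R_def S_def)
  have rw: "l2_inner r w = R - t * S"
    using l2_inner_lincomb_right[OF rl(1) vl(1) rl(1), of 1 "- t"] by (simp add: w_def R_def S_def)
  have vw: "l2_inner v w = S - t * l2_inner v v"
    using l2_inner_lincomb_right[OF rl(1) vl(1) vl(1), of 1 "- t"]
    by (simp add: w_def S_def l2_inner_commute)
  have Jrw: "l2_inner (?J r) w = F - t * (R + x * S)"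
    using l2_inner_lincomb_right[OF rl(1) vl(1) rl(2), of 1 "- t"] by (simp add: w_def F_def JrV)
  have Jvw: "l2_inner (?J v) w = R - t * S + x * (S - t * l2_inner v v)"
    using l2_inner_lincomb_left[OF rl(1) vl(1) wl, of 1 x] by (simp add: Jv rw vw)
  have ww: "l2_inner w w = R - t * S - t * (S - t * l2_inner v v)"
    using l2_inner_lincomb_left[OF rl(1) vl(1) wl, of 1 "- t", folded w_lincomb] rw vw by simp
  have "?J w = (\<lambda>k. 1 * ?J r k + (- t) * ?J v k)"
    unfolding w_lincomb by (rule jacobi_real_lincomb)
  then have Jww: "l2_inner (?J w) w = F - t * (R + x * S) - t * (R - t * S + x * (S - t * l2_inner v v))"
    using l2_inner_lincomb_left[OF rl(2) vl(2) wl, of 1 "- t"] Jrw Jvw by simp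
  show ?thesis
    unfolding ww Jww by (simp add: R_def S_def F_def power2_eq_square algebra_simps)
qed

text \<open>The improved bound is \<open>x + 1/C\<close>, \<open>C\<close> a norm bound of \<open>(J - x)\<^sup>-\<^sup>1\<close>: test the form
  on \<open>r - (J - x)\<^sup>-\<^sup>1 r / C\<close>.\<close>
lemma jacobi_lower_bound_improve:
  assumes sym: "\<And>r s. r \<in> jacobi_dom_real q lam \<Longrightarrow> s \<in> jacobi_dom_real q lam \<Longrightarrow>
      l2_inner (jacobi_real q lam r) s = l2_inner r (jacobi_real q lam s)"
    and lb: "jacobi_lower_bound q lam x"
    and res: "complex_of_real x \<in> jacobi_resolvent_set q lam"
  shows "\<exists>\<epsilon>>0. jacobi_lower_bound q lam (x + \<epsilon>)"
proof -
  obtain C where C: "C > 0" and preimage: "\<And>r. r \<in> l2_real \<Longrightarrow> \<exists>v\<in>jacobi_dom_real q lam.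
      jacobi_real q lam v = (\<lambda>k. r k + x * v k) \<and> l2_inner v v \<le> C\<^sup>2 * l2_inner r r"
    using jacobi_resolvent_real_preimage[OF res] by blast
  have "(x + 1 / C) * l2_inner r r \<le> l2_inner (jacobi_real q lam r) r"
    if r: "r \<in> jacobi_dom_real q lam" for r
  proof -
    have rl: "r \<in> l2_real" using r by (simp add: jacobi_dom_real_def)
    obtain v where v: "v \<in> jacobi_dom_real q lam" and Jv: "jacobi_real q lam v = (\<lambda>k. r k + x * v k)"
      and V: "l2_inner v v \<le> C\<^sup>2 * l2_inner r r"
      using preimage[OF rl] by auto
    have vl: "v \<in> l2_real" using v by (simp add: jacobi_dom_real_def)
    define w where "w = (\<lambda>k. r k - 1 / C * v k)"
    have "w = (\<lambda>k. 1 * r k + (- (1 / C)) * v k)" by (simp add: w_def)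
    then have "w \<in> jacobi_dom_real q lam"
      using jacobi_dom_real_lincomb[OF r v] by (simp only:)
    then have "x * l2_inner w w \<le> l2_inner (jacobi_real q lam w) w"
      using lb by (simp add: jacobi_lower_bound_def)
    then have "0 \<le> l2_inner (jacobi_real q lam r) r - x * l2_inner r r - 2 * (1 / C) * l2_inner r r
        + (1 / C)\<^sup>2 * l2_inner r v"
      using jacobi_form_shifted_perturbation[OF sym[OF r v] r v Jv, of "1 / C", folded w_def]
      by simp
    moreover have "l2_inner r v \<le> C * l2_inner r r"
    proof -
      have "l2_inner r v \<le> (C * l2_inner r r + l2_inner v v / C) / 2"
        using rl vl C by (rule l2_inner_le_weighted)
      moreover have "l2_inner v v / C \<le> C * l2_inner r r"
        using V C by (simp add: field_simps power2_eq_square)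
      ultimately show ?thesis by simp
    qed
    then have "(1 / C)\<^sup>2 * l2_inner r v \<le> 1 / C * l2_inner r r"
      using C by (simp add: power2_eq_square field_simps)
    ultimately show ?thesis by (simp add: algebra_simps)
  qed
  then show ?thesis
    using C unfolding jacobi_lower_bound_def by (intro exI[of _ "1 / C"]) auto
qed

lemma jacobi_Sup_lower_bounds_in_spectrum:
  assumes sym: "\<And>r s. r \<in> jacobi_dom_real q lam \<Longrightarrow> s \<in> jacobi_dom_real q lam \<Longrightarrow>
      l2_inner (jacobi_real q lam r) s = l2_inner r (jacobi_real q lam s)"
    and "jacobi_lower_bound q lam m" and bdd: "bdd_above {x. jacobi_lower_bound q lam x}"
  shows "complex_of_real (Sup {x. jacobi_lower_bound q lam x}) \<in> jacobi_spectrum q lam"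
  unfolding jacobi_spectrum_def
proof (rule ComplI)
  let ?x = "Sup {x. jacobi_lower_bound q lam x}"
  assume "complex_of_real ?x \<in> jacobi_resolvent_set q lam"
  then obtain \<epsilon> where "\<epsilon> > 0" "jacobi_lower_bound q lam (?x + \<epsilon>)"
    using jacobi_lower_bound_improve[OF sym jacobi_lower_bound_Sup[OF assms(2) bdd]] by blast
  then show False
    using cSup_upper[OF _ bdd, of "?x + \<epsilon>"] by simp
qed

lemma jacobi_spectrum_below_Rayleigh_quotient:
  assumes sym: "\<And>r s. r \<in> jacobi_dom_real q lam \<Longrightarrow> s \<in> jacobi_dom_real q lam \<Longrightarrow>
      l2_inner (jacobi_real q lam r) s = l2_inner r (jacobi_real q lam s)"
    and lb: "jacobi_lower_bound q lam m"
    and u: "u \<in> jacobi_dom_real q lam" "0 < l2_inner u u"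
  shows "\<exists>x\<le>l2_inner (jacobi_real q lam u) u / l2_inner u u.
    complex_of_real x \<in> jacobi_spectrum q lam"
proof (intro exI conjI)
  let ?\<rho> = "l2_inner (jacobi_real q lam u) u / l2_inner u u"
  have bdd: "bdd_above {x. jacobi_lower_bound q lam x}"
    using jacobi_lower_bound_le_Rayleigh_quotient[OF _ u] by (intro bdd_aboveI[of _ ?\<rho>]) auto
  show "complex_of_real (Sup {x. jacobi_lower_bound q lam x}) \<in> jacobi_spectrum q lam"
    by (rule jacobi_Sup_lower_bounds_in_spectrum[OF sym lb bdd])
  show "Sup {x. jacobi_lower_bound q lam x} \<le> ?\<rho>"
    using lb jacobi_lower_bound_le_Rayleigh_quotient[OF _ u] by (intro cSup_least) auto
qed

section \<open>A test vector below one half\<close>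

primrec sign_twist :: "(nat \<Rightarrow> real) \<Rightarrow> nat \<Rightarrow> real" where
  "sign_twist lam 0 = 1"
| "sign_twist lam (Suc k) = - sgn (lam k) * sign_twist lam k"

lemma sign_twist_square:
  assumes "\<And>k. lam k \<noteq> 0"
  shows "(sign_twist lam k)\<^sup>2 = 1"
proof (induction k)
  case (Suc k)
  have "(sgn (lam k))\<^sup>2 = 1" using assms[of k] by (simp add: sgn_if)
  then show ?case using Suc by (simp add: power_mult_distrib)
qed simp

lemma jacobi_truncated_form_sign_twist:
  assumes "\<And>k. lam k \<noteq> 0"
  shows "jacobi_truncated_form q lam (\<lambda>k. sign_twist lam k * f k) N
    = jacobi_truncated_form q (\<lambda>k. - \<bar>lam k\<bar>) f N"
proof -
  have off: "lam k * (sign_twist lam k * f k) * (sign_twist lam (Suc k) * f (Suc k))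
      = - \<bar>lam k\<bar> * f k * f (Suc k)" for k
    using sign_twist_square[of lam k, OF assms]
    by (simp add: power2_eq_square abs_if sgn_if algebra_simps)
  have sq: "(sign_twist lam k * f k)\<^sup>2 = (f k)\<^sup>2" for k
    using sign_twist_square[of lam k, OF assms] by (simp add: power_mult_distrib)
  show ?thesis
    unfolding jacobi_truncated_form_def off sq by (rule refl)
qed

definition cutoff :: "nat \<Rightarrow> nat \<Rightarrow> real" where
  "cutoff N i = max 0 (min 1 ((2 * real N - real i) / real N))"

lemma cutoff_eq_one: "0 < N \<Longrightarrow> i \<le> N \<Longrightarrow> cutoff N i = 1"
  by (simp add: cutoff_def field_simps)

lemma cutoff_eq_zero: "0 < N \<Longrightarrow> 2 * N \<le> i \<Longrightarrow> cutoff N i = 0"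
  by (simp add: cutoff_def field_simps)

lemma cutoff_step_energy:
  assumes "0 < N"
  shows "4 * (real i + 1) * (cutoff N (Suc i) - cutoff N i)\<^sup>2
    \<le> (if i \<in> {N..<2 * N} then 8 / real N else 0)"
proof (cases "i \<in> {N..<2 * N}")
  case True
  have "\<bar>cutoff N (Suc i) - cutoff N i\<bar>
      \<le> \<bar>(2 * real N - real (Suc i)) / real N - (2 * real N - real i) / real N\<bar>"
    unfolding cutoff_def by (auto simp: max_def min_def abs_if)
  also have "\<dots> = 1 / real N" using assms by (simp add: field_simps)
  finally have "(cutoff N (Suc i) - cutoff N i)\<^sup>2 \<le> (1 / real N)\<^sup>2"
    by (metis abs_ge_zero power2_abs power_mono)
  moreover have "real i + 1 \<le> 2 * real N" using True by auto
  ultimately have "4 * (real i + 1) * (cutoff N (Suc i) - cutoff N i)\<^sup>2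
      \<le> 4 * (2 * real N) * (1 / real N)\<^sup>2"
    by (intro mult_mono) auto
  also have "\<dots> = 8 / real N" using assms by (simp add: power2_eq_square field_simps)
  finally show ?thesis using True by simp
next
  case False
  then have "i < N \<or> 2 * N \<le> i" by auto
  then show ?thesis
    using False cutoff_eq_one[OF assms] cutoff_eq_zero[OF assms] by auto
qed

lemma cutoff_energy_le:
  assumes "0 < N"
  shows "(\<Sum>i<m. 4 * (real i + 1) * (cutoff N (Suc i) - cutoff N i)\<^sup>2) \<le> 8"
proof -
  have "(\<Sum>i<m. 4 * (real i + 1) * (cutoff N (Suc i) - cutoff N i)\<^sup>2)
      \<le> (\<Sum>i<m. if i \<in> {N..<2 * N} then 8 / real N else 0)"
    by (intro sum_mono cutoff_step_energy[OF assms])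
  also have "\<dots> = (\<Sum>i\<in>{..<m} \<inter> {N..<2 * N}. 8 / real N)"
    by (rule sum.inter_restrict[symmetric]) simp
  also have "\<dots> \<le> (\<Sum>i\<in>{N..<2 * N}. 8 / real N)"
    by (intro sum_mono2) auto
  also have "\<dots> = 8" using assms by simp
  finally show ?thesis .
qed

lemma jacobi_truncated_form_minus_half:
  "jacobi_truncated_form (\<lambda>k. real (k + 1)) (\<lambda>k. - (w k * real (k + 1))) f N
     - 1/2 * (\<Sum>k\<le>N. (f k)\<^sup>2)
   = (\<Sum>k<N. (real k + 1/2) * (f k)\<^sup>2 - 2 * w k * real (k + 1) * f k * f (Suc k))
     + (real N + 1/2) * (f N)\<^sup>2"
  by (induction N) (simp_all add: jacobi_truncated_form_def sum_distrib_left algebra_simps)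

lemma pair_block_identity:
  fixes a b y p q p' :: real
  assumes "a + b = 1"
  shows "(2 * y + 1/2) * p\<^sup>2 - 2 * a * (2 * y + 1) * p * q
       + (2 * y + 3/2) * q\<^sup>2 - 2 * b * (2 * y + 2) * q * p'
     = (b - a) / 2 * (p\<^sup>2 - q\<^sup>2) + a * (2 * y + 1) * (q - p)\<^sup>2 + 2 * b * (y + 1) * (p' - q)\<^sup>2
       + (2 * b * y * p\<^sup>2 - 2 * b * (y + 1) * p'\<^sup>2)"
proof -
  have a: "a = 1 - b" using assms by simp
  show ?thesis unfolding a by (simp add: power2_eq_square field_simps)
qed

lemma alternating_form_pair_sum:
  fixes a b :: real and p q :: "nat \<Rightarrow> real"
  assumes "a + b = 1"
  defines "f \<equiv> \<lambda>k. if even k then p (k div 2) else q (k div 2)"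
    and "w \<equiv> \<lambda>k. if even k then a else b"
  shows "(\<Sum>k<2 * m. (real k + 1/2) * (f k)\<^sup>2 - 2 * w k * real (k + 1) * f k * f (Suc k))
    = (\<Sum>i<m. (b - a) / 2 * ((p i)\<^sup>2 - (q i)\<^sup>2) + a * (2 * real i + 1) * (q i - p i)\<^sup>2
              + 2 * b * (real i + 1) * (p (Suc i) - q i)\<^sup>2)
      - 2 * b * real m * (p m)\<^sup>2"
proof (induction m)
  case (Suc m)
  have "f (2 * m) = p m" "f (Suc (2 * m)) = q m" "f (Suc (Suc (2 * m))) = p (Suc m)"
    "w (2 * m) = a" "w (Suc (2 * m)) = b"
    by (simp_all add: f_def w_def)
  then show ?case
    using Suc pair_block_identity[OF assms(1), of "real m" "p m" "q m" "p (Suc m)"]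
    by (simp add: algebra_simps)
qed simp

lemma pair_block_upper_bound:
  fixes a b e x p q p' :: real
  assumes ab: "a + b = 1" "0 \<le> a" "0 \<le> b" and x: "1 \<le> x"
    and e_def: "e = (b - a) / 2" and q_def: "q = p + sgn e * (\<bar>e\<bar> / 7) * p / x"
  shows "e * (p\<^sup>2 - q\<^sup>2) + a * (2 * x - 1) * (q - p)\<^sup>2 + 2 * b * x * (p' - q)\<^sup>2
    \<le> - (e\<^sup>2 / 7) * p\<^sup>2 / x + 4 * x * (p' - p)\<^sup>2"
proof -
  define t where "t = q - p"
  define D where "D = p' - p"
  have et: "e * t = e\<^sup>2 / 7 * p / x"
    by (cases "e > 0"; cases "e = 0") (auto simp: t_def q_def power2_eq_square)
  have "\<bar>e\<bar> \<le> 1/2" using ab by (simp add: e_def abs_le_iff)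
  then have "- e * t\<^sup>2 \<le> 1/2 * t\<^sup>2"
    by (intro mult_right_mono) auto
  moreover have "a * (2 * x - 1) * t\<^sup>2 \<le> 2 * x * t\<^sup>2"
  proof -
    have "a * (2 * x - 1) \<le> 1 * (2 * x)" using ab x by (intro mult_mono) auto
    then show ?thesis by (intro mult_right_mono) auto
  qed
  moreover have "2 * b * x * (D - t)\<^sup>2 \<le> 4 * x * D\<^sup>2 + 4 * x * t\<^sup>2"
  proof -
    have "(D - t)\<^sup>2 \<le> 2 * D\<^sup>2 + 2 * t\<^sup>2"
      using sum_squares_bound[of D "- t"] by (simp add: power2_eq_square algebra_simps)
    then have "2 * b * x * (D - t)\<^sup>2 \<le> 2 * x * (2 * D\<^sup>2 + 2 * t\<^sup>2)"
      using ab x by (intro mult_mono) auto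
    then show ?thesis by (simp add: algebra_simps)
  qed
  moreover have "(1/2 + 6 * x) * t\<^sup>2 \<le> e\<^sup>2 / 7 * p\<^sup>2 / x"
  proof -
    have "(1/2 + 6 * x) * t\<^sup>2 \<le> 7 * x * t\<^sup>2" using x by (intro mult_right_mono) auto
    also have "\<dots> = (sgn e)\<^sup>2 * (e\<^sup>2 / 7 * p\<^sup>2 / x)"
      using x by (simp add: t_def q_def power2_eq_square field_simps)
    also have "\<dots> \<le> e\<^sup>2 / 7 * p\<^sup>2 / x"
      using x by (intro mult_left_le_one_le) (auto simp: sgn_if)
    finally show ?thesis .
  qed
  moreover have "e * (p\<^sup>2 - q\<^sup>2) + a * (2 * x - 1) * (q - p)\<^sup>2 + 2 * b * x * (p' - q)\<^sup>2
      = - 2 * (e * t) * p - e * t\<^sup>2 + a * (2 * x - 1) * t\<^sup>2 + 2 * b * x * (D - t)\<^sup>2"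
    by (simp add: t_def D_def power2_eq_square algebra_simps)
  ultimately show ?thesis
    unfolding et D_def by (simp add: power2_eq_square field_simps)
qed

lemma cutoff_pair_sum_negative:
  fixes a b e :: real and p q :: "nat \<Rightarrow> real"
  assumes ab: "a + b = 1" "0 \<le> a" "0 \<le> b" and e: "e = (b - a) / 2"
    and N: "0 < N" "56 < e\<^sup>2 * harm N"
    and p: "p = cutoff N" and q: "\<And>i. q i = p i + sgn e * (\<bar>e\<bar> / 7) * p i / (real i + 1)"
  shows "(\<Sum>i<2 * N + 1. (b - a) / 2 * ((p i)\<^sup>2 - (q i)\<^sup>2) + a * (2 * real i + 1) * (q i - p i)\<^sup>2
            + 2 * b * (real i + 1) * (p (Suc i) - q i)\<^sup>2) < 0"
proof -
  have harm_le: "harm N \<le> (\<Sum>i<2 * N + 1. (p i)\<^sup>2 / (real i + 1))"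
  proof -
    have "harm N = (\<Sum>i<N. (p i)\<^sup>2 / (real i + 1))"
      unfolding harm_altdef using N(1)
      by (intro sum.cong) (auto simp: p cutoff_eq_one field_simps)
    also have "\<dots> \<le> (\<Sum>i<2 * N + 1. (p i)\<^sup>2 / (real i + 1))"
      by (intro sum_mono2) auto
    finally show ?thesis .
  qed
  have "(\<Sum>i<2 * N + 1. (b - a) / 2 * ((p i)\<^sup>2 - (q i)\<^sup>2) + a * (2 * real i + 1) * (q i - p i)\<^sup>2
            + 2 * b * (real i + 1) * (p (Suc i) - q i)\<^sup>2)
      \<le> (\<Sum>i<2 * N + 1. - (e\<^sup>2 / 7) * ((p i)\<^sup>2 / (real i + 1))
            + 4 * (real i + 1) * (p (Suc i) - p i)\<^sup>2)"
  proof (intro sum_mono)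
    fix i
    show "(b - a) / 2 * ((p i)\<^sup>2 - (q i)\<^sup>2) + a * (2 * real i + 1) * (q i - p i)\<^sup>2
            + 2 * b * (real i + 1) * (p (Suc i) - q i)\<^sup>2
        \<le> - (e\<^sup>2 / 7) * ((p i)\<^sup>2 / (real i + 1)) + 4 * (real i + 1) * (p (Suc i) - p i)\<^sup>2"
      using pair_block_upper_bound[OF ab _ e q[of i], where p'="p (Suc i)"]
      unfolding e[symmetric] by (simp add: algebra_simps)
  qed
  also have "\<dots> = - (e\<^sup>2 / 7) * (\<Sum>i<2 * N + 1. (p i)\<^sup>2 / (real i + 1))
      + (\<Sum>i<2 * N + 1. 4 * (real i + 1) * (p (Suc i) - p i)\<^sup>2)"
    by (simp only: sum.distrib sum_distrib_left)
  also have "\<dots> \<le> - (e\<^sup>2 / 7) * harm N + 8"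
    using mult_left_mono_neg[OF harm_le, of "- (e\<^sup>2 / 7)"] cutoff_energy_le[OF N(1), of "2 * N + 1"]
    unfolding p by (intro add_mono) auto
  also have "\<dots> < 0" using N(2) by simp
  finally show ?thesis .
qed

lemma periodic_jacobi_test_vector:
  fixes c1 c2 :: real
  assumes c: "\<bar>c1\<bar> + \<bar>c2\<bar> = 1" and c12: "c1 * c2 \<noteq> 0" and cne: "\<bar>c1\<bar> \<noteq> \<bar>c2\<bar>"
  defines "lam \<equiv> \<lambda>k. per_coeff c1 c2 k * real (k + 1)"
  shows "\<exists>r\<in>jacobi_dom_real (\<lambda>k. real (k + 1)) lam.
    l2_inner (jacobi_real (\<lambda>k. real (k + 1)) lam r) r < 1/2 * l2_inner r r"
proof -
  define a b e where "a = \<bar>c1\<bar>" and "b = \<bar>c2\<bar>" and "e = (b - a) / 2"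
  have ab: "a + b = 1" "0 \<le> a" "0 \<le> b" using c by (auto simp: a_def b_def)
  have "e \<noteq> 0" using cne by (simp add: e_def a_def b_def)
  obtain N where "0 < N" and "56 / e\<^sup>2 < harm N"
    using harm_unbounded by blast
  moreover have "0 < e\<^sup>2" using \<open>e \<noteq> 0\<close> by simp
  ultimately have N: "0 < N" "56 < e\<^sup>2 * harm N" by (simp_all add: field_simps)
  define p where "p = cutoff N"
  define q where "q i = p i + sgn e * (\<bar>e\<bar> / 7) * p i / (real i + 1)" for i
  define f where "f k = (if even k then p (k div 2) else q (k div 2))" for k
  define w where "w k = (if even k then a else b)" for k :: nat
  define m where "m = 2 * N + 1"
  define r where "r k = sign_twist lam k * f k" for k
  have lam: "lam k \<noteq> 0" for k
    using c12 by (simp add: lam_def per_coeff_def)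
  have p0: "p i = 0" if "2 * N \<le> i" for i
    using cutoff_eq_zero[OF N(1) that] by (simp add: p_def)
  have f0: "f k = 0" if "2 * m \<le> k" for k
    using that p0[of "k div 2"] by (auto simp: f_def q_def m_def)
  have r0: "r k = 0" if "2 * m \<le> k" for k
    using f0[OF that] by (simp add: r_def)
  have "l2_inner (jacobi_real (\<lambda>k. real (k + 1)) lam r) r - 1/2 * l2_inner r r
      = jacobi_truncated_form (\<lambda>k. real (k + 1)) (\<lambda>k. - (w k * real (k + 1))) f (2 * m)
        - 1/2 * (\<Sum>k\<le>2 * m. (f k)\<^sup>2)"
  proof -
    have "(\<lambda>k. - \<bar>lam k\<bar>) = (\<lambda>k. - (w k * real (k + 1)))"
      by (auto simp: lam_def w_def per_coeff_def a_def b_def abs_mult)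
    moreover have "(r k)\<^sup>2 = (f k)\<^sup>2" for k
      using sign_twist_square[of lam k, OF lam] by (simp add: r_def power_mult_distrib)
    ultimately show ?thesis
      using jacobi_form_finite_support(2,3)[of "2 * m" r, OF r0]
        jacobi_truncated_form_sign_twist[of lam, OF lam]
      by (simp add: r_def[abs_def])
  qed
  also have "\<dots> = (\<Sum>i<m. (b - a) / 2 * ((p i)\<^sup>2 - (q i)\<^sup>2) + a * (2 * real i + 1) * (q i - p i)\<^sup>2
              + 2 * b * (real i + 1) * (p (Suc i) - q i)\<^sup>2)"
    using jacobi_truncated_form_minus_half[of w f "2 * m"] f0[of "2 * m"] p0[of m]
      alternating_form_pair_sum[OF ab(1), of p q m]
    by (simp add: f_def[abs_def] w_def[abs_def] m_def)
  also have "\<dots> < 0"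
    unfolding m_def by (rule cutoff_pair_sum_negative[OF ab e_def N p_def q_def])
  finally show ?thesis
    using jacobi_form_finite_support(1)[of "2 * m" r, OF r0] by auto
qed

theorem theorem3:
  fixes c1 c2 :: real
  assumes "\<bar>c1\<bar> + \<bar>c2\<bar> = 1"
    and "c1 * c2 \<noteq> 0"
    and "\<bar>c1\<bar> \<noteq> \<bar>c2\<bar>"
  shows "\<exists>x::real. x < 1/2 \<and>
           complex_of_real x \<in> jacobi_spectrum (\<lambda>k. real (k + 1))
                                (\<lambda>k. per_coeff c1 c2 k * real (k + 1))"
proof -
  let ?q = "\<lambda>k. real (k + 1)" and ?lam = "\<lambda>k. per_coeff c1 c2 k * real (k + 1)"
  have c: "\<bar>per_coeff c1 c2 k\<bar> + \<bar>per_coeff c1 c2 (Suc k)\<bar> \<le> 1" for k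
    using assms(1) by (simp add: per_coeff_def)
  have sym: "l2_inner (jacobi_real ?q ?lam r) s = l2_inner r (jacobi_real ?q ?lam s)"
    if "r \<in> jacobi_dom_real ?q ?lam" "s \<in> jacobi_dom_real ?q ?lam" for r s
  proof (rule jacobi_real_symmetric[OF _ that])
    show "\<bar>per_coeff c1 c2 k * real (k + 1)\<bar> \<le> 1 * real (Suc k)" for k
      using c[of k] by (simp add: abs_mult mult_right_mono)
  qed
  have nonneg: "jacobi_lower_bound ?q ?lam 0"
    using jacobi_form_nonneg[of "per_coeff c1 c2", OF c] by (simp add: jacobi_lower_bound_def)
  obtain r where r: "r \<in> jacobi_dom_real ?q ?lam"
    and below: "l2_inner (jacobi_real ?q ?lam r) r < 1/2 * l2_inner r r"
    using periodic_jacobi_test_vector[OF assms] by blast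
  have R: "0 < l2_inner r r"
    using nonneg r below by (force simp: jacobi_lower_bound_def)
  obtain x where "x \<le> l2_inner (jacobi_real ?q ?lam r) r / l2_inner r r"
    and "complex_of_real x \<in> jacobi_spectrum ?q ?lam"
    using jacobi_spectrum_below_Rayleigh_quotient[OF sym nonneg r R] by blast
  moreover have "l2_inner (jacobi_real ?q ?lam r) r / l2_inner r r < 1/2"
    using below R by (simp add: field_simps)
  ultimately show ?thesis by (meson order_le_less_trans)
qed

end
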